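(* Let $r,q\in\mathbb N$ and let $M=(a_{ik})_{i,k=0}^\infty$ be an infinite complex matrix with $a_{ik}=0$ whenever $k>i+r$ or $i>k+q$, $a_{i,i+r}=1$ and $a_{i+q,i}\neq 0$ for all $i\ge 0$. For $k\ge 0$, $m=1,\dots,r$, $n=1,\dots,q$ put $S^{m,n}_k=(M^k)_{m-1,n-1}$ (entries of the $k$-th matrix power; $M^0$ is the identity). Define the infinite matrix $(\alpha_{i,j})_{i,j\ge 0}$ by $\alpha_{i,j}=S^{m_1,n_1}_{k_1+k_2}$ with $k_1=\lfloor i/r\rfloor$, $k_2=\lfloor j/q\rfloor$, $m_1=\operatorname{rem}(i,r)+1$, $n_1=\operatorname{rem}(j,q)+1$, and let $\Delta_k=\det(\alpha_{i,j})_{i,j=0}^{k}$ for $k\ge 0$, $\Delta_{-1}=1$. Then $\Delta_0=\Delta_1=\dots=\Delta_{q-1}=1$ and, for every $i\ge 0$, $$\Delta_{i+q}=\prod_{j=0}^{i} a_{j+q,\,j}^{\;\lfloor (i-j)/q\rfloor+1},$$ i.e. $\Delta_{i+q}=(a_{i+q,i}\cdots a_{i+1,i-q+1})(a_{i,i-q}\cdots a_{i-q+1,i-2q+1})^2\cdots(\cdots a_{q,0})^{h}$ with $h=\lfloor (i+q)/q\rfloor$, where factors $a_{j+q,j}$ with $j<0$ are interpreted as $1$.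
   Context: $\operatorname{rem}(a,b)$ denotes the remainder of $a$ upon division by $b$. The product formula is an equivalent rewriting of the paper's grouped formula: the $q$ consecutive factors $a_{j+q,j}$ with $j=i,\dots,i-q+1$ appear to power 1, the next $q$ to power 2, etc., up to $a_{q,0}$ appearing to power $h$. *)

theory Defs
  imports Complex_Main "Jordan_Normal_Form.Determinant"
begin

text \<open>Infinite matrices indexed by nat x nat. The product of infinite matrices is
the usual sum over the (finite, for banded matrices) set of indices where the summand
is nonzero.\<close>

definition inf_mat_mult :: "(nat \<Rightarrow> nat \<Rightarrow> complex) \<Rightarrow> (nat \<Rightarrow> nat \<Rightarrow> complex) \<Rightarrow> nat \<Rightarrow> nat \<Rightarrow> complex" where
  "inf_mat_mult A B i j = (\<Sum>l | A i l * B l j \<noteq> 0. A i l * B l j)"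

fun inf_mat_pow :: "(nat \<Rightarrow> nat \<Rightarrow> complex) \<Rightarrow> nat \<Rightarrow> nat \<Rightarrow> nat \<Rightarrow> complex" where
  "inf_mat_pow M 0 = (\<lambda>i j. if i = j then 1 else 0)"
| "inf_mat_pow M (Suc k) = inf_mat_mult (inf_mat_pow M k) M"

definition S_entry :: "(nat \<Rightarrow> nat \<Rightarrow> complex) \<Rightarrow> nat \<Rightarrow> nat \<Rightarrow> nat \<Rightarrow> complex" where
  "S_entry M m n k = inf_mat_pow M k (m - 1) (n - 1)"

definition alpha :: "(nat \<Rightarrow> nat \<Rightarrow> complex) \<Rightarrow> nat \<Rightarrow> nat \<Rightarrow> nat \<Rightarrow> nat \<Rightarrow> complex" where
  "alpha M r q i j = S_entry M (i mod r + 1) (j mod q + 1) (i div r + j div q)"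

definition Delta :: "(nat \<Rightarrow> nat \<Rightarrow> complex) \<Rightarrow> nat \<Rightarrow> nat \<Rightarrow> nat \<Rightarrow> complex" where
  "Delta M r q k = det (mat (k + 1) (k + 1) (\<lambda>(i, j). alpha M r q i j))"

end

theory Submission
  imports Defs
begin

(* Since M^(k+l) = M^k M^l, the matrix (alpha i j) for i, j <= K factors as U V with
   U i l = (M^(i div r)) (i mod r) l  and  V l j = (M^(j div q)) l (j mod q);
   all sums are finite because M^k is banded, with bandwidth k r above and k q below the
   diagonal. Row i of U ends exactly at column i with the extreme superdiagonal entry 1 of
   M^(i div r), so det U = 1. Column j of V ends at row j with the extreme subdiagonal entry
   c j of M^(j div q), the pivot, and c j = 1 for j < q while c (j + q) = M (j + q) j * c j.
   Hence Delta k = c 0 * ... * c k, in which M (j + q) j occurs once for each of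
   c (j + q), c (j + 2 q), ... up to index k, i.e. (k - j) div q times. *)

lemma prod_atMost_add_split:
  fixes i q :: nat
  shows "(\<Prod>j\<le>i + q. c j) = (\<Prod>j<q. c j) * (\<Prod>j\<le>i. c (j + q))"
proof -
  have "{..i + q} = {..<q} \<union> {0 + q..i + q}" by auto
  then have "(\<Prod>j\<le>i + q. c j) = (\<Prod>j<q. c j) * (\<Prod>j\<in>{0 + q..i + q}. c j)"
    by (simp add: prod.union_disjoint ivl_disj_int)
  then show ?thesis
    by (simp only: prod.shift_bounds_cl_nat_ivl atLeast0AtMost)
qed

lemma prod_power_div_shift:
  fixes a :: "nat \<Rightarrow> 'a::comm_monoid_mult"
  assumes "q > 0"
  shows "(\<Prod>j\<le>i + q. a j ^ ((i + q - j) div q)) = (\<Prod>j\<le>i. a j ^ ((i - j) div q + 1))"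
proof -
  have "(\<Prod>j\<le>i + q. a j ^ ((i + q - j) div q)) = (\<Prod>j\<le>i. a j ^ ((i + q - j) div q))"
  proof (rule prod.mono_neutral_right)
    have "(i + q - j) div q = 0" if "i < j" for j
      using that assms by simp
    then show "\<forall>j\<in>{..i + q} - {..i}. a j ^ ((i + q - j) div q) = 1"
      by auto
  qed auto
  also have "\<dots> = (\<Prod>j\<le>i. a j ^ ((i - j) div q + 1))"
  proof (rule prod.cong)
    fix j assume "j \<in> {..i}"
    then have "i + q - j = (i - j) + q" by simp
    then have "(i + q - j) div q = (i - j) div q + 1"
      using assms by (simp only: div_add_self2)
    then show "a j ^ ((i + q - j) div q) = a j ^ ((i - j) div q + 1)"
      by (simp only:)
  qed simp
  finally show ?thesis .
qed

lemma prod_atMost_eq_prod_power_div: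
  fixes a c :: "nat \<Rightarrow> 'a::comm_monoid_mult"
  assumes "q > 0" and "\<And>j. j < q \<Longrightarrow> c j = 1" and "\<And>j. c (j + q) = a j * c j"
  shows "(\<Prod>j\<le>i. c j) = (\<Prod>j\<le>i. a j ^ ((i - j) div q))"
proof (induction i rule: less_induct)
  case (less i)
  show ?case
  proof (cases "i < q")
    case True
    then show ?thesis by (simp add: assms(2))
  next
    case False
    define i' where "i' = i - q"
    with False have i: "i = i' + q" by simp
    have "(\<Prod>j\<le>i' + q. c j) = (\<Prod>j<q. c j) * (\<Prod>j\<le>i'. c (j + q))"
      by (rule prod_atMost_add_split)
    also have "\<dots> = (\<Prod>j\<le>i'. a j) * (\<Prod>j\<le>i'. c j)"
      by (simp add: assms(2,3) prod.distrib)
    also have "\<dots> = (\<Prod>j\<le>i'. a j) * (\<Prod>j\<le>i'. a j ^ ((i' - j) div q))"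
      using less.IH[of i'] i assms(1) by simp
    also have "\<dots> = (\<Prod>j\<le>i'. a j ^ ((i' - j) div q + 1))"
      by (simp add: prod.distrib[symmetric])
    also have "\<dots> = (\<Prod>j\<le>i' + q. a j ^ ((i' + q - j) div q))"
      by (rule prod_power_div_shift[symmetric]) (fact assms(1))
    finally show ?thesis unfolding i .
  qed
qed

lemma inf_mat_mult_eq_sum:
  assumes "finite L" and "\<And>l. l \<notin> L \<Longrightarrow> A i l * B l j = 0"
  shows "inf_mat_mult A B i j = (\<Sum>l\<in>L. A i l * B l j)"
  unfolding inf_mat_mult_def
  by (rule sum.mono_neutral_left) (use assms in auto)

declare inf_mat_pow.simps(2)[simp del]

locale upper_banded =
  fixes M :: "nat \<Rightarrow> nat \<Rightarrow> complex" and r :: nat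
  assumes zero_above_band: "\<And>i k. k > i + r \<Longrightarrow> M i k = 0"
begin

lemma pow_zero_above_band: "j > i + k * r \<Longrightarrow> inf_mat_pow M k i j = 0"
proof (induction k arbitrary: j)
  case 0
  then show ?case by simp
next
  case (Suc k)
  have "inf_mat_pow M (Suc k) i j = (\<Sum>l\<le>i + k * r. inf_mat_pow M k i l * M l j)"
    unfolding inf_mat_pow.simps(2) by (rule inf_mat_mult_eq_sum) (auto simp: Suc.IH)
  also have "\<dots> = 0"
  proof (intro sum.neutral ballI)
    fix l assume "l \<in> {..i + k * r}"
    then have "j > l + r" using Suc.prems by auto
    then show "inf_mat_pow M k i l * M l j = 0" by (simp add: zero_above_band)
  qed
  finally show ?case .
qed

lemma pow_Suc_eq_sum:
  "N > i + k * r \<Longrightarrow> inf_mat_pow M (Suc k) i j = (\<Sum>l<N. inf_mat_pow M k i l * M l j)"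
  unfolding inf_mat_pow.simps(2) by (rule inf_mat_mult_eq_sum) (auto simp: pow_zero_above_band)

lemma pow_1: "inf_mat_pow M 1 i j = M i j"
proof -
  have "inf_mat_pow M (Suc 0) i j = (\<Sum>l<Suc i. inf_mat_pow M 0 i l * M l j)"
    by (rule pow_Suc_eq_sum) simp
  then show ?thesis by (simp add: if_distrib sum.delta cong: if_cong)
qed

lemma pow_add_eq_sum:
  "N > m + a * r \<Longrightarrow> inf_mat_pow M (a + b) m n = (\<Sum>l<N. inf_mat_pow M a m l * inf_mat_pow M b l n)"
proof (induction b arbitrary: n)
  case 0
  have "(\<Sum>l<N. inf_mat_pow M a m l * inf_mat_pow M 0 l n)
      = (\<Sum>l<N. if l = n then inf_mat_pow M a m l else 0)"
    by (rule sum.cong) auto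
  then show ?case
    using 0 pow_zero_above_band[of m a n] by (simp add: sum.delta)
next
  case (Suc b)
  have "inf_mat_pow M (a + Suc b) m n = (\<Sum>p<N + b * r. inf_mat_pow M (a + b) m p * M p n)"
    using pow_Suc_eq_sum[of m "a + b" "N + b * r"] Suc.prems by (simp add: algebra_simps)
  also have "\<dots> = (\<Sum>p<N + b * r. (\<Sum>l<N. inf_mat_pow M a m l * inf_mat_pow M b l p) * M p n)"
    using Suc.IH[OF Suc.prems] by simp
  also have "\<dots> = (\<Sum>l<N. inf_mat_pow M a m l * (\<Sum>p<N + b * r. inf_mat_pow M b l p * M p n))"
    by (simp add: sum_distrib_left sum_distrib_right mult.assoc sum.swap[of _ "{..<N}"])
  also have "\<dots> = (\<Sum>l<N. inf_mat_pow M a m l * inf_mat_pow M (Suc b) l n)"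
    by (intro sum.cong refl arg_cong2[where f = "(*)"] pow_Suc_eq_sum[symmetric]) auto
  finally show ?case .
qed

lemma pow_extreme_superdiag:
  assumes "\<And>i. M i (i + r) = 1"
  shows "inf_mat_pow M k i (i + k * r) = 1"
proof (induction k)
  case 0
  then show ?case by simp
next
  case (Suc k)
  let ?j = "i + Suc k * r"
  have "inf_mat_pow M (Suc k) i ?j = (\<Sum>l<Suc (i + k * r). inf_mat_pow M k i l * M l ?j)"
    by (rule pow_Suc_eq_sum) simp
  also have "\<dots> = (\<Sum>l<i + k * r. inf_mat_pow M k i l * M l ?j) + inf_mat_pow M k i (i + k * r)"
    using assms[of "i + k * r"] by (simp add: algebra_simps)
  also have "(\<Sum>l<i + k * r. inf_mat_pow M k i l * M l ?j) = 0"
    by (intro sum.neutral ballI) (auto simp: zero_above_band)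
  finally show ?case using Suc.IH by simp
qed

end

locale banded = upper_banded +
  fixes q :: nat
  assumes zero_below_band: "\<And>i k. i > k + q \<Longrightarrow> M i k = 0"
begin

lemma pow_zero_below_band: "i > j + k * q \<Longrightarrow> inf_mat_pow M k i j = 0"
proof (induction k arbitrary: j)
  case 0
  then show ?case by simp
next
  case (Suc k)
  have "inf_mat_pow M (Suc k) i j = (\<Sum>l<Suc (i + k * r). inf_mat_pow M k i l * M l j)"
    by (rule pow_Suc_eq_sum) simp
  also have "\<dots> = 0"
  proof (intro sum.neutral ballI)
    fix l
    show "inf_mat_pow M k i l * M l j = 0"
    proof (cases "l > j + q")
      case True
      then show ?thesis by (simp add: zero_below_band)
    next
      case False
      then have "i > l + k * q" using Suc.prems by auto
      then show ?thesis by (simp add: Suc.IH)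
    qed
  qed
  finally show ?case .
qed

lemma pow_extreme_subdiag_Suc:
  "inf_mat_pow M (Suc k) (j + Suc k * q) j
     = M (j + Suc k * q) (j + k * q) * inf_mat_pow M k (j + k * q) j"
proof -
  let ?i = "j + Suc k * q"
  have "inf_mat_pow M (1 + k) ?i j = (\<Sum>l<Suc (?i + r). inf_mat_pow M 1 ?i l * inf_mat_pow M k l j)"
    by (rule pow_add_eq_sum) simp
  also have "\<dots> = (\<Sum>l<Suc (?i + r). M ?i l * inf_mat_pow M k l j)"
    by (simp only: pow_1)
  also have "\<dots> = (\<Sum>l<Suc (?i + r). if l = j + k * q then M ?i l * inf_mat_pow M k l j else 0)"
  proof (rule sum.cong)
    fix l
    show "M ?i l * inf_mat_pow M k l j = (if l = j + k * q then M ?i l * inf_mat_pow M k l j else 0)"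
      by (cases "l < j + k * q")
        (auto simp: zero_below_band pow_zero_below_band)
  qed simp
  also have "\<dots> = M ?i (j + k * q) * inf_mat_pow M k (j + k * q) j"
    by (simp add: sum.delta')
  finally show ?thesis by simp
qed

definition pivot :: "nat \<Rightarrow> complex" where
  "pivot j = inf_mat_pow M (j div q) j (j mod q)"

lemma pivot_less: "j < q \<Longrightarrow> pivot j = 1"
  unfolding pivot_def by simp

lemma pivot_add:
  assumes "q > 0"
  shows "pivot (j + q) = M (j + q) j * pivot j"
proof -
  have j: "j mod q + j div q * q = j" by simp
  have j_add: "j + q = j mod q + Suc (j div q) * q" by simp
  have "(j + q) div q = Suc (j div q)" "(j + q) mod q = j mod q"
    using assms by simp_all
  then have "pivot (j + q) = inf_mat_pow M (Suc (j div q)) (j mod q + Suc (j div q) * q) (j mod q)"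
    unfolding pivot_def by (subst (2) j_add) (simp only:)
  also have "\<dots> = M (j mod q + Suc (j div q) * q) (j mod q + j div q * q)
      * inf_mat_pow M (j div q) (j mod q + j div q * q) (j mod q)"
    by (rule pow_extreme_subdiag_Suc)
  also have "\<dots> = M (j + q) j * pivot j"
    unfolding pivot_def j j_add[symmetric] ..
  finally show ?thesis .
qed

definition alpha_left :: "nat \<Rightarrow> complex mat" where
  "alpha_left K = mat K K (\<lambda>(i, l). inf_mat_pow M (i div r) (i mod r) l)"

definition alpha_right :: "nat \<Rightarrow> complex mat" where
  "alpha_right K = mat K K (\<lambda>(l, j). inf_mat_pow M (j div q) l (j mod q))"

lemma alpha_mat_eq_mult: "mat K K (\<lambda>(i, j). alpha M r q i j) = alpha_left K * alpha_right K"
proof (rule eq_matI)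
  fix i j assume "i < dim_row (alpha_left K * alpha_right K)" "j < dim_col (alpha_left K * alpha_right K)"
  then have "i < K" "j < K" by (auto simp: alpha_left_def alpha_right_def)
  then have "(alpha_left K * alpha_right K) $$ (i, j)
      = (\<Sum>l<K. inf_mat_pow M (i div r) (i mod r) l * inf_mat_pow M (j div q) l (j mod q))"
    by (simp add: alpha_left_def alpha_right_def scalar_prod_def atLeast0LessThan)
  also have "\<dots> = inf_mat_pow M (i div r + j div q) (i mod r) (j mod q)"
    by (rule pow_add_eq_sum[symmetric]) (use \<open>i < K\<close> in simp)
  finally show "mat K K (\<lambda>(i, j). alpha M r q i j) $$ (i, j) = (alpha_left K * alpha_right K) $$ (i, j)"
    using \<open>i < K\<close> \<open>j < K\<close> by (simp add: alpha_def S_entry_def)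
qed (auto simp: alpha_left_def alpha_right_def)

lemma det_alpha_left:
  assumes "\<And>i. M i (i + r) = 1"
  shows "det (alpha_left K) = 1"
proof -
  have "det (alpha_left K) = prod_list (diag_mat (alpha_left K))"
    by (rule det_lower_triangular[of K])
      (auto simp: alpha_left_def pow_zero_above_band mult.commute[of _ r])
  also have "\<dots> = (\<Prod>i<K. inf_mat_pow M (i div r) (i mod r) i)"
    by (simp add: prod_list_diag_prod alpha_left_def atLeast0LessThan)
  also have "\<dots> = 1"
    using pow_extreme_superdiag[OF assms, of "i div r" "i mod r" for i] by simp
  finally show ?thesis .
qed

lemma det_alpha_right: "det (alpha_right K) = (\<Prod>j<K. pivot j)"
proof -
  have "upper_triangular (alpha_right K)"
    by (auto simp: upper_triangular_def alpha_right_def pow_zero_below_band mult.commute[of _ q])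
  then have "det (alpha_right K) = prod_list (diag_mat (alpha_right K))"
    by (rule det_upper_triangular[of _ K]) (simp add: alpha_right_def)
  then show ?thesis
    by (simp add: prod_list_diag_prod alpha_right_def atLeast0LessThan pivot_def)
qed

lemma Delta_eq_prod_pivot:
  assumes "\<And>i. M i (i + r) = 1"
  shows "Delta M r q k = (\<Prod>j\<le>k. pivot j)"
proof -
  have "Delta M r q k = det (alpha_left (Suc k)) * det (alpha_right (Suc k))"
    unfolding Delta_def alpha_mat_eq_mult Suc_eq_plus1[symmetric]
    by (rule det_mult) (auto simp: alpha_left_def alpha_right_def)
  then show ?thesis
    by (simp add: det_alpha_left[OF assms] det_alpha_right lessThan_Suc_atMost)
qed

end

theorem lemma1:
  fixes M :: "nat \<Rightarrow> nat \<Rightarrow> complex" and r q :: nat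
  assumes "r \<ge> 1" and "q \<ge> 1"
    and "\<And>i k. k > i + r \<Longrightarrow> M i k = 0"
    and "\<And>i k. i > k + q \<Longrightarrow> M i k = 0"
    and "\<And>i. M i (i + r) = 1"
    and "\<And>i. M (i + q) i \<noteq> 0"
  shows "(\<forall>k < q. Delta M r q k = 1) \<and>
         (\<forall>i. Delta M r q (i + q) = (\<Prod>j = 0..i. M (j + q) j ^ ((i - j) div q + 1)))"
proof -
  interpret banded M r q
    using assms(3,4) by unfold_locales
  have q: "q > 0" using assms(2) by simp
  have Delta_eq: "Delta M r q k = (\<Prod>j\<le>k. M (j + q) j ^ ((k - j) div q))" for k
    unfolding Delta_eq_prod_pivot[OF assms(5)]
    by (rule prod_atMost_eq_prod_power_div[where c = pivot, OF q pivot_less pivot_add[OF q]])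
  show ?thesis
    unfolding Delta_eq prod_power_div_shift[OF q] atLeast0AtMost
    by simp
qed

end
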